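(* Let $\mathcal{H}$ be a complex Hilbert space, $A\in\mathcal{B}(\mathcal{H})$ positive and $S\in\mathcal{B}_A(\mathcal{H})$. Then $$\max\left\{\omega_A\left(\Re_A(S)+iS^{\sharp_A}S\right),\ \omega_A\left(\Im_A(S)+iS^{\sharp_A}S\right)\right\}\le d\omega_A(S)$$ and $$d\omega_A(S)\le\min\left\{\sqrt{\omega_A^2\left(\Re_A(S)+iS^{\sharp_A}S\right)+\|\Im_A(S)\|_A^2},\ \sqrt{\omega_A^2\left(\Im_A(S)+iS^{\sharp_A}S\right)+\|\Re_A(S)\|_A^2}\right\}.$$
   Context: $\mathcal{B}(\mathcal{H})$ denotes the bounded linear operators on $\mathcal{H}$. For positive $A$, $\langle x,z\rangle_A=\langle Ax,z\rangle$ and $\|z\|_A=\|A^{1/2}z\|$. $\mathcal{B}_A(\mathcal{H})$ is the set of $S\in\mathcal{B}(\mathcal{H})$ for which some $R\in\mathcal{B}(\mathcal{H})$ satisfies $AR=S^*A$; for such $S$, $S^{\sharp_A}=A^{\dagger}S^*A$ with $A^\dagger$ the Moore–Penrose inverse of $A$. $\Re_A(S)=\frac{S+S^{\sharp_A}}{2}$ and $\Im_A(S)=\frac{S-S^{\sharp_A}}{2i}$. For operators $T$ bounded with respect to $\|\cdot\|_A$: $\|T\|_A=\sup_{\|z\|_A=1}\|Tz\|_A$, $\omega_A(T)=\sup_{\|z\|_A=1}|\langle Tz,z\rangle_A|$, and $d\omega_A(T)=\sup_{\|z\|_A=1}(|\langle Tz,z\rangle_A|^2+\|Tz\|_A^4)^{1/2}$.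 *)

theory Defs
  imports "HOL-Analysis.Analysis"
begin

class chilbert = banach +
  fixes scaleC :: "complex \<Rightarrow> 'a \<Rightarrow> 'a" (infixr "*\<^sub>C" 75)
    and cinner :: "'a \<Rightarrow> 'a \<Rightarrow> complex"
  assumes scaleC_add_right: "a *\<^sub>C (x + y) = a *\<^sub>C x + a *\<^sub>C y"
    and scaleC_add_left: "(a + b) *\<^sub>C x = a *\<^sub>C x + b *\<^sub>C x"
    and scaleC_scaleC: "a *\<^sub>C (b *\<^sub>C x) = (a * b) *\<^sub>C x"
    and scaleC_one: "1 *\<^sub>C x = x"
    and scaleR_scaleC: "scaleR r x = complex_of_real r *\<^sub>C x"
    and cinner_commute: "cinner x y = cnj (cinner y x)"
    and cinner_add_left: "cinner (x + y) z = cinner x z + cinner y z"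
    and cinner_scaleC_left: "cinner (a *\<^sub>C x) y = a * cinner x y"
    and cinner_self_norm: "cinner x x = complex_of_real ((norm x)\<^sup>2)"

definition bounded_clinear :: "('a::chilbert \<Rightarrow> 'b::chilbert) \<Rightarrow> bool" where
  "bounded_clinear f \<longleftrightarrow>
     (\<forall>x y. f (x + y) = f x + f y) \<and> (\<forall>c x. f (c *\<^sub>C x) = c *\<^sub>C f x) \<and>
     (\<exists>K. \<forall>x. norm (f x) \<le> norm x * K)"

definition positive_op :: "('a::chilbert \<Rightarrow> 'a) \<Rightarrow> bool" where
  "positive_op A \<longleftrightarrow> bounded_clinear A \<and>
     (\<forall>x. Im (cinner (A x) x) = 0 \<and> 0 \<le> Re (cinner (A x) x))"

definition adjoint :: "('a::chilbert \<Rightarrow> 'a) \<Rightarrow> ('a \<Rightarrow> 'a)" where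
  "adjoint S = (SOME T. \<forall>x y. cinner (S x) y = cinner x (T y))"

text \<open>Moore--Penrose inverse of a bounded operator A, defined on
  \<open>R(A) \<oplus> R(A)\<^sup>\<bottom>\<close>: for \<open>y = Aw + z\<close> with \<open>w \<in> N(A)\<^sup>\<bottom>\<close> and \<open>z \<in> R(A)\<^sup>\<bottom>\<close>,
  \<open>A\<^sup>\<dagger> y = w\<close> (values outside this domain are irrelevant).\<close>
definition mp_inverse :: "('a::chilbert \<Rightarrow> 'a) \<Rightarrow> ('a \<Rightarrow> 'a)" where
  "mp_inverse A y = (SOME w. (\<forall>u. A u = 0 \<longrightarrow> cinner w u = 0) \<and>
                          (\<exists>z. (\<forall>u. cinner z (A u) = 0) \<and> y = A w + z))"

definition in_BA :: "('a::chilbert \<Rightarrow> 'a) \<Rightarrow> ('a \<Rightarrow> 'a) \<Rightarrow> bool" where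
  "in_BA A S \<longleftrightarrow> bounded_clinear S \<and>
     (\<exists>R. bounded_clinear R \<and> (\<forall>x. A (R x) = adjoint S (A x)))"

definition A_adjoint :: "('a::chilbert \<Rightarrow> 'a) \<Rightarrow> ('a \<Rightarrow> 'a) \<Rightarrow> ('a \<Rightarrow> 'a)" where
  "A_adjoint A S = (\<lambda>x. mp_inverse A (adjoint S (A x)))"

definition ReA :: "('a::chilbert \<Rightarrow> 'a) \<Rightarrow> ('a \<Rightarrow> 'a) \<Rightarrow> ('a \<Rightarrow> 'a)" where
  "ReA A S = (\<lambda>x. (1/2) *\<^sub>C (S x + A_adjoint A S x))"

definition ImA :: "('a::chilbert \<Rightarrow> 'a) \<Rightarrow> ('a \<Rightarrow> 'a) \<Rightarrow> ('a \<Rightarrow> 'a)" where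
  "ImA A S = (\<lambda>x. (1 / (2 * \<i>)) *\<^sub>C (S x - A_adjoint A S x))"

text \<open>\<open>\<langle>x,z\<rangle>\<^sub>A = \<langle>Ax,z\<rangle>\<close> and \<open>\<parallel>z\<parallel>\<^sub>A = \<parallel>A\<^sup>1\<^sup>/\<^sup>2z\<parallel> = sqrt \<langle>Az,z\<rangle>\<close>.\<close>
definition ainner :: "('a::chilbert \<Rightarrow> 'a) \<Rightarrow> 'a \<Rightarrow> 'a \<Rightarrow> complex" where
  "ainner A x z = cinner (A x) z"

definition anorm :: "('a::chilbert \<Rightarrow> 'a) \<Rightarrow> 'a \<Rightarrow> real" where
  "anorm A z = sqrt (Re (cinner (A z) z))"

text \<open>Suprema over the A-unit sphere (0 is added so that the value is 0 when the sphere is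
  empty, i.e. A = 0; all quantities are nonnegative so this is harmless otherwise).\<close>
definition opnormA :: "('a::chilbert \<Rightarrow> 'a) \<Rightarrow> ('a \<Rightarrow> 'a) \<Rightarrow> real" where
  "opnormA A T = Sup (insert 0 {anorm A (T z) | z. anorm A z = 1})"

definition numradA :: "('a::chilbert \<Rightarrow> 'a) \<Rightarrow> ('a \<Rightarrow> 'a) \<Rightarrow> real" where
  "numradA A T = Sup (insert 0 {cmod (ainner A (T z) z) | z. anorm A z = 1})"

definition dnumradA :: "('a::chilbert \<Rightarrow> 'a) \<Rightarrow> ('a \<Rightarrow> 'a) \<Rightarrow> real" where
  "dnumradA A T = Sup (insert 0
     {sqrt ((cmod (ainner A (T z) z))\<^sup>2 + (anorm A (T z)) ^ 4) | z. anorm A z = 1})"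

end

theory Submission
  imports Defs
begin

text \<open>
  Fix z with \<open>\<parallel>z\<parallel>\<^sub>A = 1\<close> and put \<open>w = \<langle>Sz, z\<rangle>\<^sub>A\<close>, \<open>s = \<parallel>Sz\<parallel>\<^sub>A\<close>.
  Since \<open>A S\<^sup>\<sharp> = S\<^sup>* A\<close>, the numbers \<open>\<langle>S\<^sup>\<sharp>Sz, z\<rangle>\<^sub>A = s\<^sup>2\<close>,
  \<open>\<langle>Re\<^sub>A(S)z, z\<rangle>\<^sub>A = Re w\<close> and \<open>\<langle>Im\<^sub>A(S)z, z\<rangle>\<^sub>A = Im w\<close> are real. Hence
  \<open>\<langle>(Re\<^sub>A(S) + iS\<^sup>\<sharp>S)z, z\<rangle>\<^sub>A = Re w + i s\<^sup>2\<close> has squared modulus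
  \<open>(Re w)\<^sup>2 + s\<^sup>4 \<le> |w|\<^sup>2 + s\<^sup>4\<close>, while
  \<open>|w|\<^sup>2 + s\<^sup>4 = |Re w + i s\<^sup>2|\<^sup>2 + (Im w)\<^sup>2\<close> and
  \<open>|Im w| \<le> \<parallel>Im\<^sub>A(S)z\<parallel>\<^sub>A\<close>; the same holds with Re and Im exchanged.
  Taking suprema over the A-unit sphere gives the theorem.

  The suprema are finite because S is A-bounded: if \<open>AR = S\<^sup>*A\<close>, then \<open>Q = RS\<close> is
  A-selfadjoint with \<open>\<parallel>Sz\<parallel>\<^sub>A\<^sup>2 = \<langle>Qz, z\<rangle>\<^sub>A\<close>, and iterating
  \<open>\<parallel>Qx\<parallel>\<^sub>A\<^sup>2 \<le> \<parallel>Q\<^sup>2x\<parallel>\<^sub>A \<parallel>x\<parallel>\<^sub>A\<close> bounds \<open>\<parallel>Qx\<parallel>\<^sub>A\<close>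
  by the operator norm of Q. The identity \<open>A S\<^sup>\<sharp> = S\<^sup>* A\<close> itself rests on
  \<open>A A\<^sup>\<dagger> A = A\<close>, a consequence of the projection theorem.
\<close>

section \<open>Complex inner product spaces\<close>

lemma scaleC_zero_right [simp]: "a *\<^sub>C (0::'a::chilbert) = 0"
proof -
  have "a *\<^sub>C (0::'a) = a *\<^sub>C 0 + a *\<^sub>C 0" by (metis add.right_neutral scaleC_add_right)
  then show ?thesis by simp
qed

lemma scaleC_zero_left [simp]: "0 *\<^sub>C (x::'a::chilbert) = 0"
  by (metis of_real_0 scaleR_scaleC scaleR_zero_left)

lemma scaleC_minus_left: "(- a) *\<^sub>C (x::'a::chilbert) = - (a *\<^sub>C x)"
  by (metis add.right_inverse add_eq_0_iff scaleC_add_left scaleC_zero_left)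

lemma cinner_zero_left [simp]: "cinner (0::'a::chilbert) y = 0"
  by (metis add_cancel_right_right add_0 cinner_add_left)

lemma cinner_minus_left: "cinner (- x::'a::chilbert) y = - cinner x y"
  by (metis add.right_inverse add_eq_0_iff cinner_add_left cinner_zero_left)

lemma cinner_diff_left: "cinner (x - y::'a::chilbert) z = cinner x z - cinner y z"
  by (metis cinner_add_left cinner_minus_left diff_conv_add_uminus)

lemma cinner_add_right: "cinner (x::'a::chilbert) (y + z) = cinner x y + cinner x z"
  by (metis cinner_add_left cinner_commute complex_cnj_add)

lemma cinner_diff_right: "cinner (x::'a::chilbert) (y - z) = cinner x y - cinner x z"
  by (metis cinner_commute cinner_diff_left complex_cnj_diff)

lemma cinner_zero_right [simp]: "cinner (x::'a::chilbert) 0 = 0"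
  by (metis cinner_commute cinner_zero_left complex_cnj_zero)

lemma cinner_scaleC_right: "cinner (x::'a::chilbert) (a *\<^sub>C y) = cnj a * cinner x y"
  by (metis cinner_commute cinner_scaleC_left complex_cnj_mult)

lemmas cinner_simps = cinner_add_left cinner_add_right cinner_diff_left cinner_diff_right
  cinner_scaleC_left cinner_scaleC_right cinner_minus_left

lemma power2_norm_eq_cinner: "(norm (x::'a::chilbert))\<^sup>2 = Re (cinner x x)"
  by (simp add: cinner_self_norm)

lemma cinner_eq_zero_iff: "cinner (x::'a::chilbert) x = 0 \<longleftrightarrow> x = 0"
  by (simp add: cinner_self_norm)

lemma parallelogram_law:
  "(norm (a + b))\<^sup>2 + (norm (a - b))\<^sup>2 = 2 * (norm a)\<^sup>2 + 2 * (norm (b::'a::chilbert))\<^sup>2"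
  by (simp add: power2_norm_eq_cinner cinner_simps)

lemma bounded_clinear_add: "bounded_clinear f \<Longrightarrow> f (x + y) = f x + f y"
  by (simp add: bounded_clinear_def)

lemma bounded_clinear_scaleC: "bounded_clinear f \<Longrightarrow> f (c *\<^sub>C x) = c *\<^sub>C f x"
  by (simp add: bounded_clinear_def)

lemma bounded_clinear_zero: "bounded_clinear (f::'a::chilbert \<Rightarrow> 'b::chilbert) \<Longrightarrow> f 0 = 0"
  by (metis bounded_clinear_scaleC scaleC_zero_left)

lemma bounded_clinear_diff:
  "bounded_clinear (f::'a::chilbert \<Rightarrow> 'b::chilbert) \<Longrightarrow> f (x - y) = f x - f y"
  by (metis add_diff_cancel bounded_clinear_add diff_add_cancel)

lemma bounded_clinear_bound:
  assumes "bounded_clinear f"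
  obtains K where "0 \<le> K" "\<And>x. norm (f x) \<le> norm x * K"
proof -
  obtain K where K: "\<And>x. norm (f x) \<le> norm x * K"
    using assms by (auto simp: bounded_clinear_def)
  have "norm (f x) \<le> norm x * max K 0" for x
    by (metis K max.cobounded1 mult_left_mono norm_ge_zero order_trans)
  then show thesis by (intro that[of "max K 0"]) auto
qed

lemma bounded_clinear_imp_bounded_linear:
  assumes "bounded_clinear (f::'a::chilbert \<Rightarrow> 'b::chilbert)"
  shows "bounded_linear f"
proof -
  obtain K where "\<And>x. norm (f x) \<le> norm x * K" using bounded_clinear_bound[OF assms] by blast
  then show ?thesis
    using assms by (intro bounded_linear_intro) (auto simp: bounded_clinear_def scaleR_scaleC)
qed

lemma bounded_clinear_compose:
  assumes "bounded_clinear f" "bounded_clinear (g::'a::chilbert \<Rightarrow> 'b::chilbert)"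
  shows "bounded_clinear (\<lambda>x. f (g x))"
proof -
  obtain Kf Kg where "0 \<le> Kf" "\<And>x. norm (f x) \<le> norm x * Kf" "\<And>x. norm (g x) \<le> norm x * Kg"
    using bounded_clinear_bound[OF assms(1)] bounded_clinear_bound[OF assms(2)] by metis
  then have "norm (f (g x)) \<le> norm x * (Kg * Kf)" for x
    by (metis mult.assoc mult_right_mono order_trans)
  then show ?thesis
    using assms by (auto simp: bounded_clinear_def)
qed

lemma closed_kernel: "bounded_linear f \<Longrightarrow> closed {x. f x = 0}"
  by (intro closed_Collect_eq linear_continuous_on continuous_on_const)

lemma cinner_bounded_clinear_add_scaleC:
  assumes "bounded_clinear (A::'a::chilbert \<Rightarrow> 'a)"
  shows "cinner (A (x + c *\<^sub>C y)) (x + c *\<^sub>C y)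
    = cinner (A x) x + cnj c * cinner (A x) y + c * cinner (A y) x + c * cnj c * cinner (A y) y"
  by (simp add: bounded_clinear_add[OF assms] bounded_clinear_scaleC[OF assms] cinner_simps
      algebra_simps)

section \<open>Positive operators and the A-seminorm\<close>

lemma positive_op_imp_bounded_clinear: "positive_op A \<Longrightarrow> bounded_clinear A"
  by (simp add: positive_op_def)

lemma positive_op_hermitian:
  fixes A :: "'a::chilbert \<Rightarrow> 'a"
  assumes A: "positive_op A"
  shows "cinner (A y) x = cnj (cinner (A x) y)"
proof -
  have L: "bounded_clinear A" using A by (rule positive_op_imp_bounded_clinear)
  have Im0: "Im (cinner (A u) u) = 0" for u using A by (simp add: positive_op_def)
  have "Im (cinner (A (x + 1 *\<^sub>C y)) (x + 1 *\<^sub>C y)) = 0" by (rule Im0)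
  then have "Im (cinner (A x) y) + Im (cinner (A y) x) = 0"
    unfolding cinner_bounded_clinear_add_scaleC[OF L] by (simp add: Im0)
  moreover have "Im (cinner (A (x + \<i> *\<^sub>C y)) (x + \<i> *\<^sub>C y)) = 0" by (rule Im0)
  then have "Re (cinner (A y) x) - Re (cinner (A x) y) = 0"
    unfolding cinner_bounded_clinear_add_scaleC[OF L] by (simp add: Im0)
  ultimately show ?thesis by (simp add: complex_eq_iff)
qed

lemma positive_op_cinner_real:
  "positive_op A \<Longrightarrow> cinner (A x) x = complex_of_real (Re (cinner (A x) x))"
  by (metis complex_is_Real_iff of_real_Re positive_op_def)

lemma anorm_nonneg: "positive_op A \<Longrightarrow> 0 \<le> anorm A x"
  by (simp add: anorm_def positive_op_def)

lemma power2_anorm: "positive_op A \<Longrightarrow> (anorm A x)\<^sup>2 = Re (cinner (A x) x)"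
  by (simp add: anorm_def positive_op_def)

lemma power2_anorm_add_scaleC:
  fixes A :: "'a::chilbert \<Rightarrow> 'a"
  assumes A: "positive_op A"
  shows "(anorm A (x + c *\<^sub>C y))\<^sup>2
    = (anorm A x)\<^sup>2 + 2 * Re (cnj c * cinner (A x) y) + (cmod c)\<^sup>2 * (anorm A y)\<^sup>2"
proof -
  have L: "bounded_clinear A" using A by (rule positive_op_imp_bounded_clinear)
  have "c * cnj c = complex_of_real ((cmod c)\<^sup>2)"
    by (metis complex_norm_square of_real_power)
  then show ?thesis
    unfolding power2_anorm[OF A] cinner_bounded_clinear_add_scaleC[OF L]
      positive_op_hermitian[OF A, of y x]
    by simp
qed

lemma le_mult_of_quadratic_nonneg:
  fixes a b k :: real
  assumes "0 \<le> b" and quadratic: "\<And>r. 0 \<le> a - 2 * r * k + r\<^sup>2 * k * b"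
  shows "k \<le> a * b"
proof (cases "b = 0")
  case True
  show ?thesis
  proof (rule ccontr)
    assume "\<not> k \<le> a * b"
    then have "k > 0" using True by simp
    have "0 \<le> a - 2 * ((a + 1) / (2 * k)) * k" using quadratic[of "(a + 1) / (2 * k)"] True by simp
    also have "\<dots> = -1" using \<open>k > 0\<close> by (simp add: field_simps)
    finally show False by simp
  qed
next
  case False
  then have "b > 0" using assms(1) by simp
  have "0 \<le> a - 2 * (1/b) * k + (1/b)\<^sup>2 * k * b" by (rule quadratic)
  also have "\<dots> = a - k / b" using \<open>b > 0\<close> by (simp add: field_simps power2_eq_square)
  finally show ?thesis using \<open>b > 0\<close> by (simp add: field_simps)
qed

lemma anorm_cauchy_schwarz:
  fixes A :: "'a::chilbert \<Rightarrow> 'a"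
  assumes A: "positive_op A"
  shows "cmod (cinner (A x) y) \<le> anorm A x * anorm A y"
proof -
  define p where "p = cinner (A x) y"
  define k where "k = (cmod p)\<^sup>2"
  have "0 \<le> (anorm A x)\<^sup>2 - 2 * r * k + r\<^sup>2 * k * (anorm A y)\<^sup>2" for r
  proof -
    define c where "c = - (complex_of_real r * p)"
    have "cnj c * p = - complex_of_real (r * k)"
      using complex_norm_square[of p] by (simp add: c_def k_def mult.commute mult.left_commute)
    then have cross: "Re (cnj c * p) = - (r * k)" by simp
    have modulus: "(cmod c)\<^sup>2 = r\<^sup>2 * k" by (simp add: c_def k_def norm_mult power_mult_distrib)
    have "0 \<le> (anorm A (x + c *\<^sub>C y))\<^sup>2" by simp
    then show ?thesis
      unfolding power2_anorm_add_scaleC[OF A] p_def[symmetric] cross modulus by simp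
  qed
  then have "k \<le> (anorm A x)\<^sup>2 * (anorm A y)\<^sup>2"
    by (rule le_mult_of_quadratic_nonneg[OF zero_le_power2])
  then show ?thesis
    using anorm_nonneg[OF A, of x] anorm_nonneg[OF A, of y]
    by (simp add: p_def k_def power2_le_iff_abs_le flip: power_mult_distrib)
qed

lemma positive_op_id: "positive_op (\<lambda>x::'a::chilbert. x)"
  unfolding positive_op_def bounded_clinear_def
  by (auto intro: exI[of _ 1] simp: cinner_self_norm)

lemma anorm_id: "anorm (\<lambda>x::'a::chilbert. x) x = norm x"
  by (simp add: anorm_def cinner_self_norm)

lemma cinner_cauchy_schwarz: "cmod (cinner x y) \<le> norm x * norm (y::'a::chilbert)"
  using anorm_cauchy_schwarz[OF positive_op_id, of x y] by (simp add: anorm_id)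

lemma anorm_scaleC:
  fixes A :: "'a::chilbert \<Rightarrow> 'a"
  assumes A: "positive_op A"
  shows "anorm A (c *\<^sub>C x) = cmod c * anorm A x"
proof (rule power2_eq_imp_eq)
  have "A 0 = 0" using A by (simp add: positive_op_imp_bounded_clinear bounded_clinear_zero)
  then show "(anorm A (c *\<^sub>C x))\<^sup>2 = (cmod c * anorm A x)\<^sup>2"
    using power2_anorm_add_scaleC[OF A, of 0 c x] by (simp add: anorm_def power_mult_distrib)
qed (simp_all add: A anorm_nonneg)

lemma anorm_triangle:
  fixes A :: "'a::chilbert \<Rightarrow> 'a"
  assumes A: "positive_op A"
  shows "anorm A (x + y) \<le> anorm A x + anorm A y"
proof (rule power2_le_imp_le)
  have "(anorm A (x + y))\<^sup>2 = (anorm A x)\<^sup>2 + 2 * Re (cinner (A x) y) + (anorm A y)\<^sup>2"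
    using power2_anorm_add_scaleC[OF A, of x 1 y] by (simp add: scaleC_one)
  also have "Re (cinner (A x) y) \<le> anorm A x * anorm A y"
    using complex_Re_le_cmod anorm_cauchy_schwarz[OF A] by (rule order_trans)
  finally show "(anorm A (x + y))\<^sup>2 \<le> (anorm A x + anorm A y)\<^sup>2"
    by (simp add: power2_sum)
qed (simp add: A anorm_nonneg add_nonneg_nonneg)

lemma anorm_diff_le:
  fixes A :: "'a::chilbert \<Rightarrow> 'a"
  assumes A: "positive_op A"
  shows "anorm A (x - y) \<le> anorm A x + anorm A y"
  using anorm_triangle[OF A, of x "(-1) *\<^sub>C y"] anorm_scaleC[OF A, of "-1" y]
  by (simp add: scaleC_minus_left scaleC_one)

lemma anorm_le_norm:
  fixes A :: "'a::chilbert \<Rightarrow> 'a"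
  assumes A: "positive_op A"
  obtains K where "0 \<le> K" "\<And>x. (anorm A x)\<^sup>2 \<le> K * (norm x)\<^sup>2"
proof -
  obtain K where K: "K \<ge> 0" "\<And>x. norm (A x) \<le> norm x * K"
    using bounded_clinear_bound[OF positive_op_imp_bounded_clinear[OF A]] by blast
  have "(anorm A x)\<^sup>2 \<le> K * (norm x)\<^sup>2" for x
  proof -
    have "(anorm A x)\<^sup>2 \<le> cmod (cinner (A x) x)"
      unfolding power2_anorm[OF A] by (rule complex_Re_le_cmod)
    also have "\<dots> \<le> norm (A x) * norm x" by (rule cinner_cauchy_schwarz)
    also have "\<dots> \<le> norm x * K * norm x" using K by (simp add: mult_right_mono)
    finally show ?thesis by (simp add: power2_eq_square algebra_simps)
  qed
  then show thesis using K that by blast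
qed

section \<open>Projection theorem, Riesz representation and adjoints\<close>

lemma minimizing_sequence_Cauchy:
  fixes M :: "'a::chilbert set" and m :: "nat \<Rightarrow> 'a"
  assumes midpoint: "\<And>x y. x \<in> M \<Longrightarrow> y \<in> M \<Longrightarrow> (1/2) *\<^sub>R (x + y) \<in> M"
    and inf: "\<And>v. v \<in> M \<Longrightarrow> d \<le> (norm (u - v))\<^sup>2"
    and m: "\<And>n. m n \<in> M" "\<And>n. (norm (u - m n))\<^sup>2 < d + inverse (real (Suc n))"
  shows "Cauchy m"
proof -
  have close: "(norm (m n - m k))\<^sup>2 \<le> 2 * inverse (real (Suc n)) + 2 * inverse (real (Suc k))"
    for n k
  proof -
    have "(u - m n) + (u - m k) = 2 *\<^sub>R (u - (1/2) *\<^sub>R (m n + m k))"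
      by (simp add: algebra_simps scaleR_2)
    then have "(norm ((u - m n) + (u - m k)))\<^sup>2 = 4 * (norm (u - (1/2) *\<^sub>R (m n + m k)))\<^sup>2"
      by (simp add: power2_eq_square)
    also have "\<dots> \<ge> 4 * d" using inf[OF midpoint[OF m(1) m(1)]] by simp
    finally show ?thesis
      using parallelogram_law[of "u - m n" "u - m k"] m(2)[of n] m(2)[of k]
      by (simp add: norm_minus_commute)
  qed
  show ?thesis
    unfolding Cauchy_def
  proof (intro allI impI)
    fix e :: real assume e: "e > 0"
    then obtain N where N: "inverse (real (Suc N)) < e\<^sup>2 / 4"
      using reals_Archimedean[of "e\<^sup>2/4"] by auto
    have "dist (m i) (m j) < e" if "i \<ge> N" "j \<ge> N" for i j
    proof -
      have "inverse (real (Suc i)) \<le> inverse (real (Suc N))"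
        "inverse (real (Suc j)) \<le> inverse (real (Suc N))"
        using that by (simp_all add: le_imp_inverse_le)
      then have "(dist (m i) (m j))\<^sup>2 < e\<^sup>2"
        using close[of i j] N unfolding dist_norm by linarith
      then show ?thesis using e by (simp add: power_less_imp_less_base)
    qed
    then show "\<exists>N. \<forall>i\<ge>N. \<forall>j\<ge>N. dist (m i) (m j) < e" by blast
  qed
qed

lemma nearest_point_exists:
  fixes M :: "'a::chilbert set"
  assumes "closed M" "M \<noteq> {}"
    and midpoint: "\<And>x y. x \<in> M \<Longrightarrow> y \<in> M \<Longrightarrow> (1/2) *\<^sub>R (x + y) \<in> M"
  shows "\<exists>p\<in>M. \<forall>v\<in>M. norm (u - p) \<le> norm (u - v)"
proof -
  define D where "D = (\<lambda>v. (norm (u - v))\<^sup>2) ` M"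
  define d where "d = Inf D"
  have bdd: "bdd_below D" unfolding D_def by (rule bdd_belowI[of _ 0]) auto
  have inf: "d \<le> (norm (u - v))\<^sup>2" if "v \<in> M" for v
    unfolding d_def by (rule cInf_lower) (use that bdd in \<open>auto simp: D_def\<close>)
  have "\<exists>v\<in>M. (norm (u - v))\<^sup>2 < d + inverse (real (Suc n))" for n
    using cInf_less_iff[OF _ bdd, of "d + inverse (real (Suc n))"] assms(2)
    by (auto simp: D_def d_def)
  then obtain m where m: "\<And>n. m n \<in> M" "\<And>n. (norm (u - m n))\<^sup>2 < d + inverse (real (Suc n))"
    by metis
  obtain p where p: "m \<longlonglongrightarrow> p"
    using minimizing_sequence_Cauchy[OF midpoint inf m] Cauchy_convergent_iff convergent_def
    by blast
  have "p \<in> M" by (rule closed_sequentially[OF assms(1) m(1) p])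
  have "(norm (u - p))\<^sup>2 \<le> d"
  proof (rule LIMSEQ_le)
    show "(\<lambda>n. (norm (u - m n))\<^sup>2) \<longlonglongrightarrow> (norm (u - p))\<^sup>2" by (intro tendsto_intros p)
    show "(\<lambda>n. d + inverse (real (Suc n))) \<longlonglongrightarrow> d"
      using tendsto_add[OF tendsto_const LIMSEQ_inverse_real_of_nat, of d] by simp
  qed (use m(2) less_imp_le in blast)
  then have "norm (u - p) \<le> norm (u - v)" if "v \<in> M" for v
    using inf[OF that] by (simp add: power2_le_imp_le)
  then show ?thesis using \<open>p \<in> M\<close> by blast
qed

lemma nearest_point_orthogonal:
  fixes M :: "'a::chilbert set"
  assumes "p \<in> M" "v \<in> M"
    and add: "\<And>x y. x \<in> M \<Longrightarrow> y \<in> M \<Longrightarrow> x + y \<in> M"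
    and scale: "\<And>c x. x \<in> M \<Longrightarrow> c *\<^sub>C x \<in> M"
    and nearest: "\<And>v. v \<in> M \<Longrightarrow> norm (u - p) \<le> norm (u - v)"
  shows "cinner (u - p) v = 0"
proof -
  define c where "c = cinner (u - p) v"
  define k where "k = (cmod c)\<^sup>2"
  have "0 \<le> 0 - 2 * r * k + r\<^sup>2 * k * (norm v)\<^sup>2" for r
  proof -
    define c' where "c' = - (complex_of_real r * c)"
    have "cnj c' * c = - complex_of_real (r * k)"
      using complex_norm_square[of c] by (simp add: c'_def k_def mult.commute mult.left_commute)
    then have cross: "Re (cnj c' * c) = - (r * k)" by simp
    have modulus: "(cmod c')\<^sup>2 = r\<^sup>2 * k" by (simp add: c'_def k_def norm_mult power_mult_distrib)
    have "u - (p + (- c') *\<^sub>C v) = (u - p) + c' *\<^sub>C v" by (simp add: scaleC_minus_left)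
    then have "norm (u - p) \<le> norm ((u - p) + c' *\<^sub>C v)"
      using nearest[OF add[OF assms(1) scale[OF assms(2)]]] by metis
    then have "(norm (u - p))\<^sup>2 \<le> (norm ((u - p) + c' *\<^sub>C v))\<^sup>2" by (simp add: power_mono)
    then show ?thesis
      unfolding power2_anorm_add_scaleC[OF positive_op_id, of "u - p" c' v, unfolded anorm_id]
        c_def[symmetric] cross modulus by simp
  qed
  then have "k \<le> 0 * (norm v)\<^sup>2" by (rule le_mult_of_quadratic_nonneg[OF zero_le_power2])
  then show ?thesis by (simp add: k_def c_def)
qed

lemma orthogonal_projection_exists:
  fixes M :: "'a::chilbert set"
  assumes "closed M" "0 \<in> M"
    and add: "\<And>x y. x \<in> M \<Longrightarrow> y \<in> M \<Longrightarrow> x + y \<in> M"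
    and scale: "\<And>c x. x \<in> M \<Longrightarrow> c *\<^sub>C x \<in> M"
  shows "\<exists>p\<in>M. \<forall>v\<in>M. cinner (u - p) v = 0"
proof -
  have midpoint: "(1/2) *\<^sub>R (x + y) \<in> M" if "x \<in> M" "y \<in> M" for x y
    unfolding scaleR_scaleC by (rule scale[OF add[OF that]])
  have "M \<noteq> {}" using assms(2) by blast
  then obtain p where p: "p \<in> M" "\<And>v. v \<in> M \<Longrightarrow> norm (u - p) \<le> norm (u - v)"
    using nearest_point_exists[OF assms(1) _ midpoint] by blast
  then show ?thesis using nearest_point_orthogonal[OF p(1) _ add scale p(2)] by blast
qed

lemma orthogonal_projection_kernel:
  fixes f :: "'a::chilbert \<Rightarrow> 'b::real_normed_vector"
  assumes f: "bounded_linear f" and scale: "\<And>c x. f x = 0 \<Longrightarrow> f (c *\<^sub>C x) = 0"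
  shows "\<exists>p. f p = 0 \<and> (\<forall>v. f v = 0 \<longrightarrow> cinner (u - p) v = 0)"
proof -
  have "\<exists>p\<in>{x. f x = 0}. \<forall>v\<in>{x. f x = 0}. cinner (u - p) v = 0"
  proof (rule orthogonal_projection_exists[OF closed_kernel[OF f]])
    show "0 \<in> {x. f x = 0}" by (simp add: linear_simps(3)[OF f])
    show "x + y \<in> {x. f x = 0}" if "x \<in> {x. f x = 0}" "y \<in> {x. f x = 0}" for x y
      using that by (simp add: linear_simps(1)[OF f])
    show "c *\<^sub>C x \<in> {x. f x = 0}" if "x \<in> {x. f x = 0}" for c x
      using that scale by simp
  qed
  then show ?thesis by blast
qed

lemma riesz_representation:
  fixes f :: "'a::chilbert \<Rightarrow> complex"
  assumes add: "\<And>x y. f (x + y) = f x + f y" and scale: "\<And>c x. f (c *\<^sub>C x) = c * f x"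
    and bound: "\<And>x. norm (f x) \<le> norm x * K"
  shows "\<exists>v. \<forall>x. f x = cinner x v"
proof (cases "\<forall>x. f x = 0")
  case True
  then show ?thesis by (intro exI[of _ 0]) simp
next
  case False
  then obtain u where "f u \<noteq> 0" by blast
  have diff: "f (x - y) = f x - f y" for x y using add[of "x - y" y] by simp
  have "bounded_linear f"
    by (rule bounded_linear_intro[OF add _ bound]) (simp add: scaleR_scaleC scale scaleR_conv_of_real)
  then obtain p where "f p = 0" and orth: "\<And>v. f v = 0 \<Longrightarrow> cinner (u - p) v = 0"
    using orthogonal_projection_kernel[of f u] scale by auto
  define w where "w = u - p"
  have "f w \<noteq> 0" using \<open>f u \<noteq> 0\<close> \<open>f p = 0\<close> by (simp add: w_def diff)
  then have "cinner w w \<noteq> 0" using scale[of 0 0] by (auto simp: cinner_eq_zero_iff)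
  show ?thesis
  proof (intro exI[of _ "(cnj (f w) / cnj (cinner w w)) *\<^sub>C w"] allI)
    fix x
    have "f (f x *\<^sub>C w - f w *\<^sub>C x) = 0" by (simp add: diff scale)
    then have "cinner w (f x *\<^sub>C w - f w *\<^sub>C x) = 0" by (simp add: orth w_def)
    then have "f x * cinner w w = f w * cinner x w"
      by (metis cinner_commute cinner_diff_left cinner_scaleC_left complex_cnj_zero eq_iff_diff_eq_0)
    have "cinner x ((cnj (f w) / cnj (cinner w w)) *\<^sub>C w) = f w / cinner w w * cinner x w"
      by (simp add: cinner_scaleC_right)
    also have "\<dots> = f x"
      using \<open>f x * cinner w w = f w * cinner x w\<close> \<open>cinner w w \<noteq> 0\<close> by (simp add: field_simps)
    finally show "f x = cinner x ((cnj (f w) / cnj (cinner w w)) *\<^sub>C w)" by simp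
  qed
qed

lemma adjoint_cinner:
  fixes S :: "'a::chilbert \<Rightarrow> 'a"
  assumes S: "bounded_clinear S"
  shows "cinner (S x) y = cinner x (adjoint S y)"
proof -
  obtain K where K: "K \<ge> 0" "\<And>x. norm (S x) \<le> norm x * K" using bounded_clinear_bound[OF S] by blast
  have "\<exists>v. \<forall>x. cinner (S x) y = cinner x v" for y
  proof (rule riesz_representation[where K = "K * norm y"])
    show "cinner (S (a + b)) y = cinner (S a) y + cinner (S b) y" for a b
      by (simp add: bounded_clinear_add[OF S] cinner_simps)
    show "cinner (S (c *\<^sub>C a)) y = c * cinner (S a) y" for c a
      by (simp add: bounded_clinear_scaleC[OF S] cinner_simps)
    show "norm (cinner (S a) y) \<le> norm a * (K * norm y)" for a
    proof -
      have "norm (cinner (S a) y) \<le> norm (S a) * norm y" by (rule cinner_cauchy_schwarz)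
      also have "\<dots> \<le> norm a * K * norm y" using K(2) by (simp add: mult_right_mono)
      finally show ?thesis by (simp add: mult.assoc)
    qed
  qed
  then have "\<exists>T. \<forall>x y. cinner (S x) y = cinner x (T y)" by metis
  then have "\<forall>x y. cinner (S x) y = cinner x (adjoint S y)"
    unfolding adjoint_def by (rule someI_ex)
  then show ?thesis by blast
qed

lemma A_mp_inverse_A:
  fixes A :: "'a::chilbert \<Rightarrow> 'a"
  assumes A: "bounded_clinear A"
  shows "A (mp_inverse A (A r)) = A r"
proof -
  obtain p where "A p = 0" and orth: "\<And>v. A v = 0 \<Longrightarrow> cinner (r - p) v = 0"
    using orthogonal_projection_kernel[OF bounded_clinear_imp_bounded_linear[OF A], of r]
    by (auto simp: bounded_clinear_scaleC[OF A])
  define m where "m = mp_inverse A (A r)"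
  let ?P = "\<lambda>w. (\<forall>v. A v = 0 \<longrightarrow> cinner w v = 0) \<and> (\<exists>z. (\<forall>v. cinner z (A v) = 0) \<and> A r = A w + z)"
  have "?P (r - p)" using orth \<open>A p = 0\<close> by (auto simp: bounded_clinear_diff[OF A])
  then have "?P m" unfolding m_def mp_inverse_def by (rule someI)
  then obtain z where z: "\<And>v. cinner z (A v) = 0" and decomp: "A r = A m + z" by blast
  have "A (r - m) = z" using decomp by (simp add: bounded_clinear_diff[OF A])
  then have "cinner z z = 0" using z by metis
  then show ?thesis using decomp by (simp add: m_def cinner_eq_zero_iff)
qed

lemma A_A_adjoint:
  fixes A S :: "'a::chilbert \<Rightarrow> 'a"
  assumes "bounded_clinear A" "in_BA A S"
  shows "A (A_adjoint A S x) = adjoint S (A x)"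
proof -
  obtain R where "\<And>x. A (R x) = adjoint S (A x)" using assms(2) by (auto simp: in_BA_def)
  then show ?thesis unfolding A_adjoint_def by (metis A_mp_inverse_A[OF assms(1)])
qed

lemma cinner_A_intertwining:
  fixes A S X :: "'a::chilbert \<Rightarrow> 'a"
  assumes "bounded_clinear S" "A (X u) = adjoint S (A u)"
  shows "cinner (A (X u)) y = cinner (A u) (S y)"
  using adjoint_cinner[OF assms(1), of y "A u"] assms(2) by (metis cinner_commute)

section \<open>A-selfadjoint operators are A-bounded\<close>

definition A_selfadjoint :: "('a::chilbert \<Rightarrow> 'a) \<Rightarrow> ('a \<Rightarrow> 'a) \<Rightarrow> bool" where
  "A_selfadjoint A Q \<longleftrightarrow> (\<forall>u y. cinner (A (Q u)) y = cinner (A u) (Q y))"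

lemma A_selfadjoint_funpow:
  assumes "A_selfadjoint A Q"
  shows "A_selfadjoint A (Q ^^ n)"
  unfolding A_selfadjoint_def
proof (induction n)
  case 0
  then show ?case by simp
next
  case (Suc n)
  show ?case
  proof (intro allI)
    fix u y
    have "cinner (A ((Q ^^ Suc n) u)) y = cinner (A ((Q ^^ n) u)) (Q y)"
      using assms by (simp add: A_selfadjoint_def)
    also have "\<dots> = cinner (A u) ((Q ^^ Suc n) y)"
      using Suc.IH by (simp add: funpow_swap1)
    finally show "cinner (A ((Q ^^ Suc n) u)) y = cinner (A u) ((Q ^^ Suc n) y)" .
  qed
qed

lemma power2_anorm_A_selfadjoint_le:
  fixes A Q :: "'a::chilbert \<Rightarrow> 'a"
  assumes A: "positive_op A" and Q: "A_selfadjoint A Q"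
  shows "(anorm A (Q x))\<^sup>2 \<le> anorm A (Q (Q x)) * anorm A x"
proof -
  have "(anorm A (Q x))\<^sup>2 = Re (cinner (A (Q (Q x))) x)"
    using Q by (simp add: power2_anorm[OF A] A_selfadjoint_def)
  also have "\<dots> \<le> cmod (cinner (A (Q (Q x))) x)" by (rule complex_Re_le_cmod)
  also have "\<dots> \<le> anorm A (Q (Q x)) * anorm A x" by (rule anorm_cauchy_schwarz[OF A])
  finally show ?thesis .
qed

lemma le_of_iterated_square_bound:
  fixes b M C :: real
  assumes "0 \<le> b" "0 \<le> M" and bound: "\<And>k. b ^ (2 ^ k) \<le> C * M ^ (2 ^ k)"
  shows "b \<le> M"
proof (rule ccontr)
  assume "\<not> b \<le> M"
  then have "M < b" by simp
  show False
  proof (cases "M = 0")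
    case True
    then show False using bound[of 0] \<open>M < b\<close> by simp
  next
    case False
    then have "M > 0" using assms(2) by simp
    define q where "q = b / M"
    have "1 < q" using \<open>M < b\<close> \<open>M > 0\<close> by (simp add: q_def)
    obtain n where n: "C < q ^ n" using real_arch_pow[OF \<open>1 < q\<close>] by blast
    have "q ^ n \<le> q ^ (2 ^ n)" using \<open>1 < q\<close> by (intro power_increasing) (simp_all add: less_imp_le)
    moreover have "b ^ (2 ^ n) = q ^ (2 ^ n) * M ^ (2 ^ n)"
      using \<open>M > 0\<close> by (simp add: q_def power_divide)
    then have "q ^ (2 ^ n) \<le> C" using bound[of n] \<open>M > 0\<close> by simp
    ultimately show False using n by simp
  qed
qed

lemma norm_funpow_le:
  fixes Q :: "'a::real_normed_vector \<Rightarrow> 'a"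
  assumes "\<And>x. norm (Q x) \<le> norm x * K" "0 \<le> K"
  shows "norm ((Q ^^ n) x) \<le> K ^ n * norm x"
proof (induction n)
  case 0
  then show ?case by simp
next
  case (Suc n)
  have "norm ((Q ^^ Suc n) x) \<le> norm ((Q ^^ n) x) * K" using assms(1) by simp
  also have "\<dots> \<le> K ^ n * norm x * K" using Suc assms(2) by (simp add: mult_right_mono)
  finally show ?case by (simp add: algebra_simps)
qed

text \<open>The sequence \<open>a k = \<parallel>(Q ^^ 2 ^ k) x\<parallel>\<^sub>A\<close> satisfies
  \<open>(a k)\<^sup>2 \<le> a (k + 1)\<close>, so \<open>a 0 ^ 2 ^ k \<le> a k\<close>, which grows at most like
  \<open>K ^ 2 ^ k\<close>.\<close>

lemma anorm_A_selfadjoint_le_on_sphere: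
  fixes A Q :: "'a::chilbert \<Rightarrow> 'a"
  assumes A: "positive_op A" and Q: "A_selfadjoint A Q"
    and K: "\<And>x. norm (Q x) \<le> norm x * K" "0 \<le> K" and x: "anorm A x = 1"
  shows "anorm A (Q x) \<le> K"
proof -
  obtain KA where KA: "0 \<le> KA" "\<And>x. (anorm A x)\<^sup>2 \<le> KA * (norm x)\<^sup>2"
    using anorm_le_norm[OF A] by blast
  define a where "a k = anorm A ((Q ^^ (2 ^ k)) x)" for k
  have a_nonneg: "0 \<le> a k" for k by (simp add: a_def anorm_nonneg[OF A])
  have a_square: "(a k)\<^sup>2 \<le> a (Suc k)" for k
    using power2_anorm_A_selfadjoint_le[OF A A_selfadjoint_funpow[OF Q, of "2 ^ k"], of x] x
    by (simp add: a_def mult_2 funpow_add)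
  have a_power: "a 0 ^ (2 ^ k) \<le> a k" for k
  proof (induction k)
    case 0
    then show ?case by simp
  next
    case (Suc k)
    have "a 0 ^ (2 ^ Suc k) = (a 0 ^ (2 ^ k))\<^sup>2" by (simp add: power_mult[symmetric] mult.commute)
    also have "\<dots> \<le> (a k)\<^sup>2" using Suc a_nonneg[of 0] by (intro power_mono) simp_all
    also have "\<dots> \<le> a (Suc k)" by (rule a_square)
    finally show ?case .
  qed
  have a_growth: "(a k)\<^sup>2 \<le> (KA * (norm x)\<^sup>2) * (K\<^sup>2) ^ (2 ^ k)" for k
  proof -
    have "(a k)\<^sup>2 \<le> KA * (norm ((Q ^^ (2 ^ k)) x))\<^sup>2" unfolding a_def by (rule KA(2))
    also have "\<dots> \<le> KA * (K ^ (2 ^ k) * norm x)\<^sup>2"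
      using norm_funpow_le[OF K, of "2 ^ k" x] KA(1) by (intro mult_left_mono power_mono) simp_all
    finally show ?thesis
      by (simp add: power_mult_distrib power_mult[symmetric] mult.commute mult.left_commute)
  qed
  have "(a 0)\<^sup>2 \<le> K\<^sup>2"
  proof (rule le_of_iterated_square_bound[where C = "KA * (norm x)\<^sup>2"])
    show "((a 0)\<^sup>2) ^ (2 ^ k) \<le> (KA * (norm x)\<^sup>2) * (K\<^sup>2) ^ (2 ^ k)" for k
    proof -
      have "((a 0)\<^sup>2) ^ (2 ^ k) = (a 0 ^ (2 ^ k))\<^sup>2" by (simp add: power_mult[symmetric] mult.commute)
      also have "\<dots> \<le> (a k)\<^sup>2" using a_power[of k] a_nonneg[of 0] by (intro power_mono) simp_all
      also have "\<dots> \<le> (KA * (norm x)\<^sup>2) * (K\<^sup>2) ^ (2 ^ k)" by (rule a_growth)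
      finally show ?thesis .
    qed
  qed simp_all
  then show ?thesis using a_nonneg[of 0] K(2) by (simp add: a_def power2_le_iff_abs_le)
qed

lemma anorm_A_selfadjoint_le:
  fixes A Q :: "'a::chilbert \<Rightarrow> 'a"
  assumes A: "positive_op A" and "bounded_clinear Q" and Q: "A_selfadjoint A Q"
    and K: "\<And>x. norm (Q x) \<le> norm x * K" "0 \<le> K"
  shows "anorm A (Q x) \<le> K * anorm A x"
proof (cases "anorm A x = 0")
  case True
  then have "(anorm A (Q x))\<^sup>2 \<le> 0" using power2_anorm_A_selfadjoint_le[OF A Q, of x] by simp
  then show ?thesis using True by simp
next
  case False
  then have "anorm A x > 0" using anorm_nonneg[OF A, of x] by simp
  define c where "c = complex_of_real (1 / anorm A x)"
  have "anorm A (c *\<^sub>C x) = 1"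
    using \<open>anorm A x > 0\<close> by (simp add: anorm_scaleC[OF A] c_def norm_divide)
  then have "anorm A (Q (c *\<^sub>C x)) \<le> K" by (rule anorm_A_selfadjoint_le_on_sphere[OF A Q K])
  moreover have "anorm A (Q (c *\<^sub>C x)) = anorm A (Q x) / anorm A x"
    using \<open>anorm A x > 0\<close>
    by (simp add: bounded_clinear_scaleC[OF assms(2)] anorm_scaleC[OF A] c_def norm_divide)
  ultimately show ?thesis using \<open>anorm A x > 0\<close> by (simp add: field_simps)
qed

section \<open>Suprema over the A-unit sphere\<close>

definition sphere_sup :: "('a::chilbert \<Rightarrow> 'a) \<Rightarrow> ('a \<Rightarrow> real) \<Rightarrow> real" where
  "sphere_sup A f = Sup (insert 0 {f z |z. anorm A z = 1})"

lemma numradA_eq_sphere_sup: "numradA A T = sphere_sup A (\<lambda>z. cmod (ainner A (T z) z))"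
  by (simp add: numradA_def sphere_sup_def)

lemma opnormA_eq_sphere_sup: "opnormA A T = sphere_sup A (\<lambda>z. anorm A (T z))"
  by (simp add: opnormA_def sphere_sup_def)

lemma dnumradA_eq_sphere_sup:
  "dnumradA A T = sphere_sup A (\<lambda>z. sqrt ((cmod (ainner A (T z) z))\<^sup>2 + (anorm A (T z)) ^ 4))"
  by (simp add: dnumradA_def sphere_sup_def)

lemma sphere_sup_upper:
  assumes "\<And>z. anorm A z = 1 \<Longrightarrow> f z \<le> M" "anorm A z = 1"
  shows "f z \<le> sphere_sup A f"
  unfolding sphere_sup_def using assms by (intro cSup_upper bdd_aboveI[of _ "max M 0"]) force+

lemma sphere_sup_nonneg:
  assumes "\<And>z. anorm A z = 1 \<Longrightarrow> f z \<le> M"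
  shows "0 \<le> sphere_sup A f"
  unfolding sphere_sup_def using assms by (intro cSup_upper bdd_aboveI[of _ "max M 0"]) force+

lemma sphere_sup_least:
  assumes "0 \<le> M" "\<And>z. anorm A z = 1 \<Longrightarrow> f z \<le> M"
  shows "sphere_sup A f \<le> M"
  unfolding sphere_sup_def using assms by (intro cSup_least) auto

lemma sphere_sup_mono:
  assumes "\<And>z. anorm A z = 1 \<Longrightarrow> f z \<le> g z" "\<And>z. anorm A z = 1 \<Longrightarrow> g z \<le> M"
  shows "sphere_sup A f \<le> sphere_sup A g"
  using assms order_trans[OF assms(1) sphere_sup_upper[OF assms(2)]]
  by (intro sphere_sup_least sphere_sup_nonneg) blast+

lemma sphere_sup_le_sqrt_sum_sq:
  assumes f: "\<And>z. anorm A z = 1 \<Longrightarrow> f z \<le> sqrt ((g z)\<^sup>2 + (h z)\<^sup>2)"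
    and g: "\<And>z. anorm A z = 1 \<Longrightarrow> 0 \<le> g z" "\<And>z. anorm A z = 1 \<Longrightarrow> g z \<le> M"
    and h: "\<And>z. anorm A z = 1 \<Longrightarrow> 0 \<le> h z" "\<And>z. anorm A z = 1 \<Longrightarrow> h z \<le> M'"
  shows "sphere_sup A f \<le> sqrt ((sphere_sup A g)\<^sup>2 + (sphere_sup A h)\<^sup>2)"
proof (rule sphere_sup_least)
  fix z assume z: "anorm A z = 1"
  have "(g z)\<^sup>2 + (h z)\<^sup>2 \<le> (sphere_sup A g)\<^sup>2 + (sphere_sup A h)\<^sup>2"
    using sphere_sup_upper[OF g(2) z] sphere_sup_upper[OF h(2) z] g(1)[OF z] h(1)[OF z]
    by (intro add_mono power_mono) simp_all
  then have "sqrt ((g z)\<^sup>2 + (h z)\<^sup>2) \<le> sqrt ((sphere_sup A g)\<^sup>2 + (sphere_sup A h)\<^sup>2)"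
    by (rule real_sqrt_le_mono)
  with f[OF z] show "f z \<le> sqrt ((sphere_sup A g)\<^sup>2 + (sphere_sup A h)\<^sup>2)"
    by (rule order_trans)
qed simp

section \<open>Operators with an A-adjoint\<close>

context
  fixes A S :: "'a::chilbert \<Rightarrow> 'a"
  assumes A: "positive_op A" and S: "in_BA A S"
begin

lemma in_BA_anorm_bound:
  obtains C where "0 \<le> C" "\<And>u. anorm A (S u) \<le> C * anorm A u"
proof -
  obtain R where "bounded_clinear R" and R: "\<And>x. A (R x) = adjoint S (A x)"
    using S by (auto simp: in_BA_def)
  have S: "bounded_clinear S" using S by (simp add: in_BA_def)
  define Q where "Q = (\<lambda>x. R (S x))"
  have "bounded_clinear Q"
    unfolding Q_def by (rule bounded_clinear_compose[OF \<open>bounded_clinear R\<close> S])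
  then obtain K where K: "0 \<le> K" "\<And>x. norm (Q x) \<le> norm x * K"
    using bounded_clinear_bound by blast
  have QA: "cinner (A (Q u)) y = cinner (A (S u)) (S y)" for u y
    unfolding Q_def by (rule cinner_A_intertwining[where X = R and A = A, OF S R])
  have "A_selfadjoint A Q"
    unfolding A_selfadjoint_def
    by (metis QA positive_op_hermitian[OF A] cinner_commute)
  have "(anorm A (S u))\<^sup>2 \<le> (sqrt K * anorm A u)\<^sup>2" for u
  proof -
    have "(anorm A (S u))\<^sup>2 = Re (cinner (A (Q u)) u)" by (simp add: QA power2_anorm[OF A])
    also have "\<dots> \<le> anorm A (Q u) * anorm A u"
      using complex_Re_le_cmod anorm_cauchy_schwarz[OF A] by (rule order_trans)
    also have "\<dots> \<le> K * anorm A u * anorm A u"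
      using anorm_A_selfadjoint_le[OF A \<open>bounded_clinear Q\<close> \<open>A_selfadjoint A Q\<close> K(2,1)]
      by (simp add: anorm_nonneg[OF A] mult_right_mono)
    also have "\<dots> = (sqrt K * anorm A u)\<^sup>2" using K(1) by (simp add: power_mult_distrib power2_eq_square)
    finally show ?thesis .
  qed
  then have "anorm A (S u) \<le> sqrt K * anorm A u" for u
    using anorm_nonneg[OF A] by (meson power2_le_imp_le mult_nonneg_nonneg real_sqrt_ge_zero K(1))
  then show thesis using that[of "sqrt K"] K(1) by simp
qed

lemma cinner_A_A_adjoint: "cinner (A (A_adjoint A S u)) y = cinner (A u) (S y)"
  using S positive_op_imp_bounded_clinear[OF A]
  by (intro cinner_A_intertwining A_A_adjoint) (auto simp: in_BA_def)

lemma anorm_A_adjoint_le: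
  assumes "0 \<le> C" "\<And>u. anorm A (S u) \<le> C * anorm A u"
  shows "anorm A (A_adjoint A S u) \<le> C * anorm A u"
proof -
  let ?t = "A_adjoint A S u"
  have "anorm A ?t * anorm A ?t = Re (cinner (A ?t) ?t)"
    by (simp add: power2_anorm[OF A, symmetric] power2_eq_square)
  also have "\<dots> = Re (cinner (A u) (S ?t))" by (simp add: cinner_A_A_adjoint)
  also have "\<dots> \<le> anorm A u * anorm A (S ?t)"
    using complex_Re_le_cmod anorm_cauchy_schwarz[OF A] by (rule order_trans)
  also have "\<dots> \<le> (C * anorm A u) * anorm A ?t"
    using mult_left_mono[OF assms(2)[of ?t] anorm_nonneg[OF A, of u]] by (simp add: algebra_simps)
  finally show ?thesis
    using anorm_nonneg[OF A, of ?t] assms(1) anorm_nonneg[OF A, of u]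
    by (cases "anorm A ?t = 0") simp_all
qed

lemma cinner_A_A_adjoint_self: "cinner (A (A_adjoint A S z)) z = cnj (cinner (A (S z)) z)"
  by (simp add: cinner_A_A_adjoint positive_op_hermitian[OF A, of z "S z"])

lemma cinner_A_A_adjoint_S: "cinner (A (A_adjoint A S (S z))) z = complex_of_real ((anorm A (S z))\<^sup>2)"
  by (simp add: cinner_A_A_adjoint power2_anorm[OF A] positive_op_cinner_real[OF A, symmetric])

lemma cinner_A_ReA: "cinner (A (ReA A S z)) z = complex_of_real (Re (cinner (A (S z)) z))"
  using positive_op_imp_bounded_clinear[OF A] by (simp add: ReA_def bounded_clinear_add bounded_clinear_scaleC
      cinner_simps cinner_A_A_adjoint_self complex_eq_iff)

lemma cinner_A_ImA: "cinner (A (ImA A S z)) z = complex_of_real (Im (cinner (A (S z)) z))"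
  using positive_op_imp_bounded_clinear[OF A] by (simp add: ImA_def bounded_clinear_diff bounded_clinear_scaleC
      cinner_simps cinner_A_A_adjoint_self complex_eq_iff)

lemma ainner_plus_A_adjoint_S:
  "ainner A (T z + \<i> *\<^sub>C A_adjoint A S (S z)) z
    = cinner (A (T z)) z + \<i> * complex_of_real ((anorm A (S z))\<^sup>2)"
  using positive_op_imp_bounded_clinear[OF A] by (simp add: ainner_def bounded_clinear_add bounded_clinear_scaleC
      cinner_simps cinner_A_A_adjoint_S)

lemma power2_cmod_ainner_ReA_plus:
  "(cmod (ainner A (ReA A S z + \<i> *\<^sub>C A_adjoint A S (S z)) z))\<^sup>2
    = (Re (ainner A (S z) z))\<^sup>2 + (anorm A (S z)) ^ 4"
  unfolding ainner_plus_A_adjoint_S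
  by (simp add: cinner_A_ReA cmod_power2 ainner_def flip: power_mult)

lemma power2_cmod_ainner_ImA_plus:
  "(cmod (ainner A (ImA A S z + \<i> *\<^sub>C A_adjoint A S (S z)) z))\<^sup>2
    = (Im (ainner A (S z) z))\<^sup>2 + (anorm A (S z)) ^ 4"
  unfolding ainner_plus_A_adjoint_S
  by (simp add: cinner_A_ImA cmod_power2 ainner_def flip: power_mult)

lemma anorm_A_adjoint_sum_bound:
  obtains C where "\<And>z. anorm A z = 1 \<Longrightarrow> anorm A (S z) + anorm A (A_adjoint A S z) \<le> 2 * C"
proof -
  obtain C where C: "0 \<le> C" "\<And>u. anorm A (S u) \<le> C * anorm A u"
    using in_BA_anorm_bound by blast
  have "anorm A (S z) + anorm A (A_adjoint A S z) \<le> 2 * C" if "anorm A z = 1" for z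
    using C(2)[of z] anorm_A_adjoint_le[OF C, of z] that by simp
  then show thesis by (rule that)
qed

lemma anorm_ReA_bound:
  obtains C where "\<And>z. anorm A z = 1 \<Longrightarrow> anorm A (ReA A S z) \<le> C"
proof -
  obtain C where C: "\<And>z. anorm A z = 1 \<Longrightarrow> anorm A (S z) + anorm A (A_adjoint A S z) \<le> 2 * C"
    using anorm_A_adjoint_sum_bound by metis
  have "anorm A (ReA A S z) \<le> C" if "anorm A z = 1" for z
  proof -
    have "anorm A (ReA A S z) = (1/2) * anorm A (S z + A_adjoint A S z)"
      by (simp add: ReA_def anorm_scaleC[OF A])
    then show ?thesis using anorm_triangle[OF A, of "S z" "A_adjoint A S z"] C[OF that] by linarith
  qed
  then show thesis by (rule that)
qed

lemma anorm_ImA_bound: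
  obtains C where "\<And>z. anorm A z = 1 \<Longrightarrow> anorm A (ImA A S z) \<le> C"
proof -
  obtain C where C: "\<And>z. anorm A z = 1 \<Longrightarrow> anorm A (S z) + anorm A (A_adjoint A S z) \<le> 2 * C"
    using anorm_A_adjoint_sum_bound by metis
  have "anorm A (ImA A S z) \<le> C" if "anorm A z = 1" for z
  proof -
    have "anorm A (ImA A S z) = (1/2) * anorm A (S z - A_adjoint A S z)"
      by (simp add: ImA_def anorm_scaleC[OF A] norm_divide norm_mult)
    then show ?thesis using anorm_diff_le[OF A, of "S z" "A_adjoint A S z"] C[OF that] by linarith
  qed
  then show thesis by (rule that)
qed

lemma dnumradA_integrand_bound:
  obtains M where "\<And>z. anorm A z = 1 \<Longrightarrow>
    sqrt ((cmod (ainner A (S z) z))\<^sup>2 + (anorm A (S z)) ^ 4) \<le> M"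
proof -
  obtain C where C: "0 \<le> C" "\<And>u. anorm A (S u) \<le> C * anorm A u"
    using in_BA_anorm_bound by blast
  have "sqrt ((cmod (ainner A (S z) z))\<^sup>2 + (anorm A (S z)) ^ 4) \<le> sqrt (C\<^sup>2 + C ^ 4)"
    if "anorm A z = 1" for z
  proof -
    have "anorm A (S z) \<le> C" using C(2)[of z] that by simp
    moreover have "cmod (ainner A (S z) z) \<le> anorm A (S z)"
      using anorm_cauchy_schwarz[OF A, of "S z" z] that by (simp add: ainner_def)
    ultimately show ?thesis
      using anorm_nonneg[OF A, of "S z"]
      by (intro real_sqrt_le_mono add_mono power_mono) simp_all
  qed
  then show thesis by (rule that)
qed

lemma cmod_ainner_ReA_plus_le:
  "cmod (ainner A (ReA A S z + \<i> *\<^sub>C A_adjoint A S (S z)) z)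
    \<le> sqrt ((cmod (ainner A (S z) z))\<^sup>2 + (anorm A (S z)) ^ 4)"
  by (rule real_le_rsqrt)
    (simp add: power2_cmod_ainner_ReA_plus cmod_power2[of "ainner A (S z) z"])

lemma cmod_ainner_ImA_plus_le:
  "cmod (ainner A (ImA A S z + \<i> *\<^sub>C A_adjoint A S (S z)) z)
    \<le> sqrt ((cmod (ainner A (S z) z))\<^sup>2 + (anorm A (S z)) ^ 4)"
  by (rule real_le_rsqrt)
    (simp add: power2_cmod_ainner_ImA_plus cmod_power2[of "ainner A (S z) z"])

lemma numradA_ReA_plus_le_dnumradA:
  "numradA A (\<lambda>x. ReA A S x + \<i> *\<^sub>C A_adjoint A S (S x)) \<le> dnumradA A S"
proof -
  obtain M where "\<And>z. anorm A z = 1 \<Longrightarrow>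
      sqrt ((cmod (ainner A (S z) z))\<^sup>2 + (anorm A (S z)) ^ 4) \<le> M"
    using dnumradA_integrand_bound by metis
  then show ?thesis
    unfolding numradA_eq_sphere_sup dnumradA_eq_sphere_sup
    by (rule sphere_sup_mono[OF cmod_ainner_ReA_plus_le])
qed

lemma numradA_ImA_plus_le_dnumradA:
  "numradA A (\<lambda>x. ImA A S x + \<i> *\<^sub>C A_adjoint A S (S x)) \<le> dnumradA A S"
proof -
  obtain M where "\<And>z. anorm A z = 1 \<Longrightarrow>
      sqrt ((cmod (ainner A (S z) z))\<^sup>2 + (anorm A (S z)) ^ 4) \<le> M"
    using dnumradA_integrand_bound by metis
  then show ?thesis
    unfolding numradA_eq_sphere_sup dnumradA_eq_sphere_sup
    by (rule sphere_sup_mono[OF cmod_ainner_ImA_plus_le])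
qed

lemma abs_Re_ainner_le_anorm_ReA:
  "anorm A z = 1 \<Longrightarrow> \<bar>Re (ainner A (S z) z)\<bar> \<le> anorm A (ReA A S z)"
  using anorm_cauchy_schwarz[OF A, of "ReA A S z" z] by (simp add: cinner_A_ReA ainner_def)

lemma abs_Im_ainner_le_anorm_ImA:
  "anorm A z = 1 \<Longrightarrow> \<bar>Im (ainner A (S z) z)\<bar> \<le> anorm A (ImA A S z)"
  using anorm_cauchy_schwarz[OF A, of "ImA A S z" z] by (simp add: cinner_A_ImA ainner_def)

lemma dnumradA_le_ReA_plus:
  "dnumradA A S \<le> sqrt ((numradA A (\<lambda>x. ReA A S x + \<i> *\<^sub>C A_adjoint A S (S x)))\<^sup>2
    + (opnormA A (ImA A S))\<^sup>2)"
proof -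
  obtain M where M: "\<And>z. anorm A z = 1 \<Longrightarrow>
      sqrt ((cmod (ainner A (S z) z))\<^sup>2 + (anorm A (S z)) ^ 4) \<le> M"
    using dnumradA_integrand_bound by metis
  obtain C where C: "\<And>z. anorm A z = 1 \<Longrightarrow> anorm A (ImA A S z) \<le> C"
    using anorm_ImA_bound by metis
  have pointwise: "sqrt ((cmod (ainner A (S z) z))\<^sup>2 + (anorm A (S z)) ^ 4)
      \<le> sqrt ((cmod (ainner A (ReA A S z + \<i> *\<^sub>C A_adjoint A S (S z)) z))\<^sup>2
        + (anorm A (ImA A S z))\<^sup>2)" if "anorm A z = 1" for z
    using power2_le_iff_abs_le[THEN iffD2, OF anorm_nonneg[OF A] abs_Im_ainner_le_anorm_ImA[OF that]]
    by (simp add: power2_cmod_ainner_ReA_plus cmod_power2[of "ainner A (S z) z"])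
  show ?thesis
    unfolding numradA_eq_sphere_sup dnumradA_eq_sphere_sup opnormA_eq_sphere_sup
    by (rule sphere_sup_le_sqrt_sum_sq[OF pointwise _ order_trans[OF cmod_ainner_ReA_plus_le M] _ C])
      (simp_all add: anorm_nonneg[OF A])
qed

lemma dnumradA_le_ImA_plus:
  "dnumradA A S \<le> sqrt ((numradA A (\<lambda>x. ImA A S x + \<i> *\<^sub>C A_adjoint A S (S x)))\<^sup>2
    + (opnormA A (ReA A S))\<^sup>2)"
proof -
  obtain M where M: "\<And>z. anorm A z = 1 \<Longrightarrow>
      sqrt ((cmod (ainner A (S z) z))\<^sup>2 + (anorm A (S z)) ^ 4) \<le> M"
    using dnumradA_integrand_bound by metis
  obtain C where C: "\<And>z. anorm A z = 1 \<Longrightarrow> anorm A (ReA A S z) \<le> C"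
    using anorm_ReA_bound by metis
  have pointwise: "sqrt ((cmod (ainner A (S z) z))\<^sup>2 + (anorm A (S z)) ^ 4)
      \<le> sqrt ((cmod (ainner A (ImA A S z + \<i> *\<^sub>C A_adjoint A S (S z)) z))\<^sup>2
        + (anorm A (ReA A S z))\<^sup>2)" if "anorm A z = 1" for z
    using power2_le_iff_abs_le[THEN iffD2, OF anorm_nonneg[OF A] abs_Re_ainner_le_anorm_ReA[OF that]]
    by (simp add: power2_cmod_ainner_ImA_plus cmod_power2[of "ainner A (S z) z"])
  show ?thesis
    unfolding numradA_eq_sphere_sup dnumradA_eq_sphere_sup opnormA_eq_sphere_sup
    by (rule sphere_sup_le_sqrt_sum_sq[OF pointwise _ order_trans[OF cmod_ainner_ImA_plus_le M] _ C])
      (simp_all add: anorm_nonneg[OF A])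
qed

end

theorem theorem2p7:
  fixes A S :: "'a::chilbert \<Rightarrow> 'a"
  assumes "positive_op A" and "in_BA A S"
  shows "max (numradA A (\<lambda>x. ReA A S x + \<i> *\<^sub>C A_adjoint A S (S x)))
             (numradA A (\<lambda>x. ImA A S x + \<i> *\<^sub>C A_adjoint A S (S x)))
           \<le> dnumradA A S
       \<and> dnumradA A S
           \<le> min (sqrt ((numradA A (\<lambda>x. ReA A S x + \<i> *\<^sub>C A_adjoint A S (S x)))\<^sup>2
                        + (opnormA A (ImA A S))\<^sup>2))
                  (sqrt ((numradA A (\<lambda>x. ImA A S x + \<i> *\<^sub>C A_adjoint A S (S x)))\<^sup>2
                        + (opnormA A (ReA A S))\<^sup>2))"
  using numradA_ReA_plus_le_dnumradA[OF assms] numradA_ImA_plus_le_dnumradA[OF assms]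
    dnumradA_le_ReA_plus[OF assms] dnumradA_le_ImA_plus[OF assms]
  by simp

end
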